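(* Suppose (A1) holds: there exists $B>0$ such that for all $x$, $\|k(x,\cdot)\|_{\mathcal H_0}\le B$ and $\big(\sum_{i=1}^d\|\partial_{x_i}k(x,\cdot)\|_{\mathcal H_0}^2\big)^{1/2}\le B$. Assume moreover that $\nabla\log\pi$ is $M$-Lipschitz and that $\int\|x\|\,\mu_n(x)\,dx$ is bounded uniformly in $n$, where $(\mu_n)$ are the SVGD iterates. Then there exists $C>0$ such that $I_{Stein}(\mu_n|\pi)\le C$ for all $n$.
   Context: Target $\pi\propto e^{-V}$ on $\mathbb R^d$, $V\in C^2$; measures with densities identified with densities. $k$ positive semi-definite kernel with RKHS $\mathcal H_0$, $\mathcal H=\mathcal H_0^d$ with $\langle f,g\rangle_{\mathcal H}=\sum_i\langle f_i,g_i\rangle_{\mathcal H_0}$, $\int k(x,x)d\mu(x)<\infty$ for all $\mu\in\mathcal P_2$. $S_\mu f=\int k(x,\cdot)f(x)d\mu(x)\in\mathcal H$, $P_\mu f(y)=\int k(x,y)f(x)d\mu(x)$. $I_{Stein}(\mu|\pi)=\|S_\mu\nabla\log(\mu/\pi)\|_{\mathcal H}^2$. SVGD iterates with step $\gamma>0$: $\mu_0\in\mathcal P_2$ with density, $\mu_{n+1}=(I-\gamma P_{\mu_n}\nabla\log(\mu_n/\pi))_\#\mu_n$. *)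

theory Defs
  imports "HOL-Analysis.Analysis"
begin

text \<open>The ambient space R^d is an abstract Euclidean space 'a (d = DIM('a)).
  Probability measures with densities are identified with their density
  functions p w.r.t. Lebesgue measure.
  The kernel k is given through a feature map Phi into a separable real
  Hilbert space 'h, k x y = Phi x . Phi y.  In this representation
  the element k(x,.) of H_0 corresponds to Phi x, the partial derivative
  of k(x,.) in direction e_i corresponds to the partial derivative of Phi,
  and the embedding S_mu f corresponds to the vector-valued integral of
  f_i(x) Phi x, componentwise.\<close>

text \<open>Score nabla log(mu/pi) = nabla p / p + nabla V, where pi is proportional to exp(-V),
  p' is the gradient of the density p and gV is the gradient of V.\<close>
definition score :: "('a::euclidean_space \<Rightarrow> real) \<Rightarrow> ('a \<Rightarrow> 'a) \<Rightarrow> ('a \<Rightarrow> 'a) \<Rightarrow> 'a \<Rightarrow> 'a"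
  where "score p p' gV x = (1 / p x) *\<^sub>R p' x + gV x"

definition P_op :: "('a::euclidean_space \<Rightarrow> 'a \<Rightarrow> real) \<Rightarrow> ('a \<Rightarrow> real) \<Rightarrow> ('a \<Rightarrow> 'a) \<Rightarrow> 'a \<Rightarrow> 'a"
  where "P_op k p f y = (\<integral>x. (k x y * p x) *\<^sub>R f x \<partial>lborel)"

definition svgd_map :: "real \<Rightarrow> ('a::euclidean_space \<Rightarrow> 'a \<Rightarrow> real) \<Rightarrow> ('a \<Rightarrow> real) \<Rightarrow> ('a \<Rightarrow> 'a) \<Rightarrow> 'a \<Rightarrow> 'a"
  where "svgd_map \<gamma> k p s x = x - \<gamma> *\<^sub>R P_op k p s x"

text \<open>I_Stein(mu|pi) = || S_mu g ||_H^2 = sum_i || integral of g_i(x) k(x,.) d mu(x) ||_{H_0}^2,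
  computed in the feature space, with g = nabla log(mu/pi).\<close>
definition I_Stein :: "('a::euclidean_space \<Rightarrow> 'h::{real_inner,banach,second_countable_topology})
    \<Rightarrow> ('a \<Rightarrow> real) \<Rightarrow> ('a \<Rightarrow> 'a) \<Rightarrow> real"
  where "I_Stein \<Phi> p g = (\<Sum>i\<in>Basis. (norm (\<integral>x. (p x * (g x \<bullet> i)) *\<^sub>R \<Phi> x \<partial>lborel))\<^sup>2)"

end

theory Submission
  imports Defs
begin

text \<open>Each summand of I_Stein is the squared norm of the feature-space vector
  v = \<integral> (\<partial>p/\<partial>x_i + p \<partial>V/\<partial>x_i) \<Phi>.  Testing v against itself, the first part pairs \<partial>p/\<partial>x_i with
  \<Phi> \<bullet> v, which by (A1) is bounded by B |v| and B |v|-Lipschitz along e_i, so an integration by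
  parts bounds it by B |v|.  The second part is at most B |v| (|\<nabla>V 0| + M \<integral> |x| p) because \<nabla>V
  grows at most linearly.  Hence |v| \<le> B (1 + |\<nabla>V 0| + M R) for R a uniform bound on the first
  moments.  The estimate holds for each density separately: the SVGD recursion enters only
  through that moment bound.\<close>

lemma lborel_integral_translate:
  fixes g :: "'a::euclidean_space \<Rightarrow> real" and c :: 'a
  assumes [measurable]: "g \<in> borel_measurable borel"
  shows "(\<integral>x. g x \<partial>lborel) = (\<integral>x. g (x + c) \<partial>lborel)"
proof -
  have "(\<integral>x. g x \<partial>lborel) = (\<integral>x. g x \<partial>(distr lborel borel ((+) c)))"
    by (simp add: lborel_distr_plus)
  also have "\<dots> = (\<integral>x. g (c + x) \<partial>lborel)"
    by (rule integral_distr) auto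
  finally show ?thesis by (simp add: add.commute)
qed

lemma lborel_nn_integral_translate:
  fixes g :: "'a::euclidean_space \<Rightarrow> ennreal" and c :: 'a
  assumes [measurable]: "g \<in> borel_measurable borel"
  shows "(\<integral>\<^sup>+x. g x \<partial>lborel) = (\<integral>\<^sup>+x. g (x + c) \<partial>lborel)"
proof -
  have "(\<integral>\<^sup>+x. g x \<partial>lborel) = (\<integral>\<^sup>+x. g x \<partial>(distr lborel borel ((+) c)))"
    by (simp add: lborel_distr_plus)
  also have "\<dots> = (\<integral>\<^sup>+x. g (c + x) \<partial>lborel)"
    by (rule nn_integral_distr) auto
  finally show ?thesis by (simp add: add.commute)
qed

lemma lborel_integrable_translate:
  fixes g :: "'a::euclidean_space \<Rightarrow> real" and c :: 'a
  assumes [measurable]: "g \<in> borel_measurable borel" and "integrable lborel g"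
  shows "integrable lborel (\<lambda>x. g (x + c))"
proof -
  have "integrable (distr lborel borel ((+) c)) g"
    using assms by (simp add: lborel_distr_plus)
  then have "integrable lborel (\<lambda>x. g (c + x))"
    by (subst (asm) integrable_distr_eq) auto
  then show ?thesis by (simp add: add.commute)
qed

lemma integral_Icc_directional_derivative:
  fixes p :: "'a::euclidean_space \<Rightarrow> real" and p' :: "'a \<Rightarrow> 'a"
  assumes p_deriv: "\<And>x. (p has_derivative (\<lambda>h. p' x \<bullet> h)) (at x)"
    and p'_cont: "continuous_on UNIV p'" and t: "t \<ge> 0"
  shows "(\<integral>s. indicator {0..t} s * (p' (x + s *\<^sub>R e) \<bullet> e) \<partial>lborel) = p (x + t *\<^sub>R e) - p x"
proof -
  have "(\<integral>s. indicator {0..t} s * (p' (x + s *\<^sub>R e) \<bullet> e) \<partial>lborel)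
      = (LBINT s=ereal 0..ereal t. p' (x + s *\<^sub>R e) \<bullet> e)"
    using t interval_integral_Icc[of 0 t "\<lambda>s. p' (x + s *\<^sub>R e) \<bullet> e"]
    by (simp add: set_lebesgue_integral_def zero_ereal_def)
  also have "\<dots> = p (x + t *\<^sub>R e) - p (x + 0 *\<^sub>R e)"
  proof (rule interval_integral_FTC_finite)
    show "continuous_on {min 0 t..max 0 t} (\<lambda>s. p' (x + s *\<^sub>R e) \<bullet> e)"
      by (intro continuous_intros continuous_on_compose2[OF p'_cont]) auto
    fix s
    have "((\<lambda>s. x + s *\<^sub>R e) has_derivative (\<lambda>h. h *\<^sub>R e)) (at s)"
      by (auto intro!: derivative_eq_intros)
    from has_derivative_compose[OF this p_deriv]
    have "((\<lambda>s. p (x + s *\<^sub>R e)) has_vector_derivative (p' (x + s *\<^sub>R e) \<bullet> e)) (at s)"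
      by (simp add: has_vector_derivative_def mult.commute)
    then show "((\<lambda>s. p (x + s *\<^sub>R e)) has_vector_derivative (p' (x + s *\<^sub>R e) \<bullet> e))
        (at s within {min 0 t..max 0 t})"
      by (rule has_vector_derivative_at_within)
  qed
  finally show ?thesis by simp
qed

lemma integrable_translated_pairing:
  fixes p' :: "'a::euclidean_space \<Rightarrow> 'a" and f :: "'a \<Rightarrow> real"
  assumes [measurable]: "p' \<in> borel_measurable borel" "f \<in> borel_measurable borel"
    and p'_int: "integrable lborel (\<lambda>x. norm (p' x))"
    and f_bound: "\<And>x. \<bar>f x\<bar> \<le> F"
  shows "integrable (lborel \<Otimes>\<^sub>M lborel)
           (\<lambda>(s, x). indicator {0..t} s * ((p' (x + s *\<^sub>R e) \<bullet> e) * f x))"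
    (is "integrable _ ?G")
proof (rule integrableI_bounded)
  show "?G \<in> borel_measurable (lborel \<Otimes>\<^sub>M lborel)" by measurable
  have F: "F \<ge> 0" using f_bound[of 0] by linarith
  define N where "N = (\<integral>x. norm (p' x) \<partial>lborel)"
  have N: "(\<integral>\<^sup>+x. ennreal (norm (p' (x + s *\<^sub>R e))) \<partial>lborel) = ennreal N" for s
    using lborel_nn_integral_translate[of "\<lambda>x. ennreal (norm (p' x))" "s *\<^sub>R e"]
      nn_integral_eq_integral[OF p'_int] by (simp add: N_def)
  have section_le:
    "(\<integral>\<^sup>+x. ennreal (norm (?G (s, x))) \<partial>lborel) \<le> ennreal (F * norm e * N) * indicator {0..t} s"
    for s
  proof -
    have "(\<integral>\<^sup>+x. ennreal (norm (?G (s, x))) \<partial>lborel)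
        \<le> (\<integral>\<^sup>+x. ennreal (indicator {0..t} s * (F * norm e)) * ennreal (norm (p' (x + s *\<^sub>R e)))
             \<partial>lborel)"
    proof (intro nn_integral_mono)
      fix x
      have "norm (?G (s, x)) = indicator {0..t} s * (\<bar>p' (x + s *\<^sub>R e) \<bullet> e\<bar> * \<bar>f x\<bar>)"
        by (simp add: abs_mult indicator_def)
      also have "\<dots> \<le> indicator {0..t} s * ((norm (p' (x + s *\<^sub>R e)) * norm e) * F)"
        by (intro mult_left_mono mult_mono Cauchy_Schwarz_ineq2 f_bound) auto
      also have "\<dots> = indicator {0..t} s * (F * norm e) * norm (p' (x + s *\<^sub>R e))"
        by (simp add: ac_simps)
      finally show "ennreal (norm (?G (s, x)))
          \<le> ennreal (indicator {0..t} s * (F * norm e)) * ennreal (norm (p' (x + s *\<^sub>R e)))"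
        by (simp add: ennreal_mult'[symmetric] F ennreal_leI)
    qed
    also have "\<dots> = ennreal (indicator {0..t} s * (F * norm e)) * ennreal N"
      by (subst nn_integral_cmult) (simp_all add: N)
    also have "\<dots> = ennreal (F * norm e * N) * indicator {0..t} s"
      by (cases "s \<in> {0..t}") (simp_all add: ennreal_mult'[symmetric] F N_def)
    finally show ?thesis .
  qed
  have "(\<integral>\<^sup>+z. ennreal (norm (?G z)) \<partial>(lborel \<Otimes>\<^sub>M lborel))
      = (\<integral>\<^sup>+s. (\<integral>\<^sup>+x. ennreal (norm (?G (s, x))) \<partial>lborel) \<partial>lborel)"
    by (rule lborel.nn_integral_fst[symmetric]) measurable
  also have "\<dots> \<le> (\<integral>\<^sup>+s. ennreal (F * norm e * N) * indicator {0..t} s \<partial>lborel)"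
    by (intro nn_integral_mono section_le)
  also have "\<dots> < \<infinity>"
    by (simp add: nn_integral_cmult_indicator ennreal_mult_less_top emeasure_lborel_Icc_eq)
  finally show "(\<integral>\<^sup>+z. ennreal (norm (?G z)) \<partial>(lborel \<Otimes>\<^sub>M lborel)) < \<infinity>" .
qed

text \<open>Integration by parts along e, done by Fubini on translates of f so that no boundary terms,
  and hence no decay of p, are needed.\<close>

lemma integral_Icc_translated_pairing:
  fixes p :: "'a::euclidean_space \<Rightarrow> real" and p' :: "'a \<Rightarrow> 'a" and f :: "'a \<Rightarrow> real"
  assumes p_deriv: "\<And>x. (p has_derivative (\<lambda>h. p' x \<bullet> h)) (at x)"
    and p'_cont: "continuous_on UNIV p'"
    and p'_int: "integrable lborel (\<lambda>x. norm (p' x))"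
    and [measurable]: "f \<in> borel_measurable borel" and f_bound: "\<And>x. \<bar>f x\<bar> \<le> F"
    and t: "t \<ge> 0"
  shows "(\<integral>s. indicator {0..t} s * (\<integral>y. (p' y \<bullet> e) * f (y - s *\<^sub>R e) \<partial>lborel) \<partial>lborel)
       = (\<integral>x. f x * (p (x + t *\<^sub>R e) - p x) \<partial>lborel)"
proof -
  have [measurable]: "p' \<in> borel_measurable borel"
    using p'_cont by (rule borel_measurable_continuous_onI)
  define G where "G = (\<lambda>(s, x). indicator {0..t} s * ((p' (x + s *\<^sub>R e) \<bullet> e) * f x))"
  have G_int: "integrable (lborel \<Otimes>\<^sub>M lborel) G"
    unfolding G_def by (rule integrable_translated_pairing[OF _ _ p'_int f_bound]) measurable
  have "(\<integral>s. indicator {0..t} s * (\<integral>y. (p' y \<bullet> e) * f (y - s *\<^sub>R e) \<partial>lborel) \<partial>lborel)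
      = (\<integral>s. (\<integral>x. G (s, x) \<partial>lborel) \<partial>lborel)"
  proof (rule Bochner_Integration.integral_cong[OF refl])
    fix s
    show "indicator {0..t} s * (\<integral>y. (p' y \<bullet> e) * f (y - s *\<^sub>R e) \<partial>lborel) = (\<integral>x. G (s, x) \<partial>lborel)"
      using lborel_integral_translate[of "\<lambda>y. (p' y \<bullet> e) * f (y - s *\<^sub>R e)" "s *\<^sub>R e"]
      by (simp add: G_def)
  qed
  also have "\<dots> = (\<integral>x. (\<integral>s. G (s, x) \<partial>lborel) \<partial>lborel)"
    using lborel_pair.Fubini_integral[of "\<lambda>s x. G (s, x)"] G_int by simp
  also have "\<dots> = (\<integral>x. f x * (p (x + t *\<^sub>R e) - p x) \<partial>lborel)"
  proof (rule Bochner_Integration.integral_cong[OF refl])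
    fix x
    have "(\<integral>s. G (s, x) \<partial>lborel) = (\<integral>s. indicator {0..t} s * (p' (x + s *\<^sub>R e) \<bullet> e) \<partial>lborel) * f x"
      by (simp add: G_def mult.assoc[symmetric])
    then show "(\<integral>s. G (s, x) \<partial>lborel) = f x * (p (x + t *\<^sub>R e) - p x)"
      using integral_Icc_directional_derivative[OF p_deriv p'_cont t] by simp
  qed
  finally show ?thesis .
qed

lemma abs_integral_translate_difference_le:
  fixes p f :: "'a::euclidean_space \<Rightarrow> real"
  assumes [measurable]: "p \<in> borel_measurable borel" "f \<in> borel_measurable borel"
    and p_int: "integrable lborel p" and p_nonneg: "\<And>x. p x \<ge> 0"
    and f_bound: "\<And>x. \<bar>f x\<bar> \<le> F"
    and f_lip: "\<And>x t. \<bar>f (x + t *\<^sub>R e) - f x\<bar> \<le> L * \<bar>t\<bar>"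
  shows "\<bar>\<integral>x. f x * (p (x + t *\<^sub>R e) - p x) \<partial>lborel\<bar> \<le> L * \<bar>t\<bar> * (\<integral>x. p x \<partial>lborel)"
proof -
  have F: "F \<ge> 0" using f_bound[of 0] by linarith
  have int_translate_f: "integrable lborel (\<lambda>x. f (x + c) * p x)" for c
    by (rule Bochner_Integration.integrable_bound[of lborel "\<lambda>x. F * p x"])
      (use p_int f_bound p_nonneg F in \<open>auto intro!: mult_right_mono simp: abs_mult\<close>)
  have int_translate_p: "integrable lborel (\<lambda>x. f x * p (x + c))" for c
  proof (rule Bochner_Integration.integrable_bound[of lborel "\<lambda>x. F * p (x + c)"])
    show "integrable lborel (\<lambda>x. F * p (x + c))"
      using lborel_integrable_translate[OF _ p_int, of c] by auto
  qed (use f_bound p_nonneg F in \<open>auto intro!: mult_right_mono simp: abs_mult\<close>)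
  have "(\<integral>x. f x * (p (x + t *\<^sub>R e) - p x) \<partial>lborel)
      = (\<integral>x. f x * p (x + t *\<^sub>R e) \<partial>lborel) - (\<integral>x. f (x + 0) * p x \<partial>lborel)"
    using int_translate_p[of "t *\<^sub>R e"] int_translate_f[of 0] by (simp add: right_diff_distrib)
  also have "(\<integral>x. f x * p (x + t *\<^sub>R e) \<partial>lborel) = (\<integral>x. f (x + (- t) *\<^sub>R e) * p x \<partial>lborel)"
    using lborel_integral_translate[of "\<lambda>x. f (x + (- t) *\<^sub>R e) * p x" "t *\<^sub>R e"] by simp
  also have "\<dots> - (\<integral>x. f (x + 0) * p x \<partial>lborel) = (\<integral>x. p x * (f (x + (- t) *\<^sub>R e) - f x) \<partial>lborel)"
    using int_translate_f[of "(- t) *\<^sub>R e"] int_translate_f[of 0]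
    by (simp add: right_diff_distrib mult.commute)
  finally have translated: "(\<integral>x. f x * (p (x + t *\<^sub>R e) - p x) \<partial>lborel)
      = (\<integral>x. p x * (f (x + (- t) *\<^sub>R e) - f x) \<partial>lborel)" .
  have "\<bar>\<integral>x. p x * (f (x + (- t) *\<^sub>R e) - f x) \<partial>lborel\<bar> \<le> (\<integral>x. p x * (L * \<bar>t\<bar>) \<partial>lborel)"
  proof (rule integral_abs_bound_integral)
    show "integrable lborel (\<lambda>x. p x * (f (x + (- t) *\<^sub>R e) - f x))"
      using int_translate_f[of "(- t) *\<^sub>R e"] int_translate_f[of 0]
      by (simp add: right_diff_distrib mult.commute)
    show "integrable lborel (\<lambda>x. p x * (L * \<bar>t\<bar>))" using p_int by simp
    fix x
    show "\<bar>p x * (f (x + (- t) *\<^sub>R e) - f x)\<bar> \<le> p x * (L * \<bar>t\<bar>)"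
      using f_lip[of x "- t"] p_nonneg[of x] by (simp add: abs_mult mult_left_mono)
  qed
  then show ?thesis
    by (simp add: translated mult.commute)
qed

lemma isCont_integral_translated_pairing:
  fixes p' :: "'a::euclidean_space \<Rightarrow> 'a" and f :: "'a \<Rightarrow> real"
  assumes [measurable]: "p' \<in> borel_measurable borel"
    and p'_int: "integrable lborel (\<lambda>x. norm (p' x))"
    and f_cont: "continuous_on UNIV f" and f_bound: "\<And>x. \<bar>f x\<bar> \<le> F"
  shows "isCont (\<lambda>s. \<integral>y. (p' y \<bullet> e) * f (y - s *\<^sub>R e) \<partial>lborel) s\<^sub>0"
  unfolding continuous_at_sequentially comp_def
proof (intro allI impI)
  have [measurable]: "f \<in> borel_measurable borel"
    using f_cont by (rule borel_measurable_continuous_onI)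
  fix X :: "nat \<Rightarrow> real" assume X: "X \<longlonglongrightarrow> s\<^sub>0"
  show "(\<lambda>n. \<integral>y. (p' y \<bullet> e) * f (y - X n *\<^sub>R e) \<partial>lborel)
      \<longlonglongrightarrow> (\<integral>y. (p' y \<bullet> e) * f (y - s\<^sub>0 *\<^sub>R e) \<partial>lborel)"
  proof (rule integral_dominated_convergence[where w="\<lambda>y. norm (p' y) * norm e * F"])
    show "integrable lborel (\<lambda>y. norm (p' y) * norm e * F)"
      using p'_int by simp
    show "AE y in lborel. (\<lambda>n. (p' y \<bullet> e) * f (y - X n *\<^sub>R e)) \<longlonglongrightarrow> (p' y \<bullet> e) * f (y - s\<^sub>0 *\<^sub>R e)"
    proof (intro AE_I2 tendsto_mult_left)
      fix y
      have "(\<lambda>n. y - X n *\<^sub>R e) \<longlonglongrightarrow> y - s\<^sub>0 *\<^sub>R e"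
        by (intro tendsto_intros X)
      moreover have "isCont f (y - s\<^sub>0 *\<^sub>R e)"
        using f_cont by (simp add: continuous_on_eq_continuous_at)
      ultimately show "(\<lambda>n. f (y - X n *\<^sub>R e)) \<longlonglongrightarrow> f (y - s\<^sub>0 *\<^sub>R e)"
        by (rule isCont_tendsto_compose[rotated])
    qed
    fix n
    show "AE y in lborel. norm ((p' y \<bullet> e) * f (y - X n *\<^sub>R e)) \<le> norm (p' y) * norm e * F"
    proof (intro AE_I2)
      fix y
      have "\<bar>p' y \<bullet> e\<bar> * \<bar>f (y - X n *\<^sub>R e)\<bar> \<le> (norm (p' y) * norm e) * F"
        by (intro mult_mono Cauchy_Schwarz_ineq2 f_bound) auto
      then show "norm ((p' y \<bullet> e) * f (y - X n *\<^sub>R e)) \<le> norm (p' y) * norm e * F"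
        by (simp add: abs_mult)
    qed
  qed measurable
qed

lemma abs_le_of_abs_integral_Icc_le:
  fixes h :: "real \<Rightarrow> real"
  assumes h_cont: "\<And>s. isCont h s"
    and integral_le: "\<And>t. t > 0 \<Longrightarrow> \<bar>\<integral>s. indicator {0..t} s * h s \<partial>lborel\<bar> \<le> t * c"
  shows "\<bar>h 0\<bar> \<le> c"
proof (rule field_le_epsilon)
  fix \<epsilon> :: real assume "\<epsilon> > 0"
  then obtain d where "d > 0" and near: "\<And>s. dist s 0 < d \<Longrightarrow> dist (h s) (h 0) < \<epsilon>"
    using h_cont[of 0] unfolding continuous_at_eps_delta by blast
  define t where "t = d / 2"
  have t: "t > 0" "t < d" using \<open>d > 0\<close> by (auto simp: t_def)
  have int_Icc: "integrable lborel (\<lambda>s. indicator {0..t} s * g s)"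
    if "\<And>s. isCont g s" for g :: "real \<Rightarrow> real"
    using borel_integrable_atLeastAtMost[of 0 t g] that by (simp add: mult.commute)
  have measure_Icc: "(\<integral>s. indicator {0..t} s * a \<partial>lborel) = t * a" for a
    using t by (simp add: measure_def emeasure_lborel_Icc_eq)
  have "\<bar>\<integral>s. indicator {0..t} s * (h s - h 0) \<partial>lborel\<bar> \<le> (\<integral>s. indicator {0..t} s * \<epsilon> \<partial>lborel)"
  proof (rule integral_abs_bound_integral)
    show "integrable lborel (\<lambda>s. indicator {0..t} s * (h s - h 0))"
      by (rule int_Icc) (intro continuous_intros h_cont)
    show "integrable lborel (\<lambda>s. indicator {0..t} s * \<epsilon>)"
      by (rule int_Icc) simp
    fix s
    show "\<bar>indicator {0..t} s * (h s - h 0)\<bar> \<le> indicator {0..t} s * \<epsilon>"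
      using near[of s] t by (auto simp: indicator_def dist_real_def)
  qed
  moreover have "(\<integral>s. indicator {0..t} s * (h s - h 0) \<partial>lborel)
      = (\<integral>s. indicator {0..t} s * h s \<partial>lborel) - t * h 0"
    using int_Icc[OF h_cont] int_Icc[of "\<lambda>_. h 0"] measure_Icc[of "h 0"]
    by (simp add: right_diff_distrib)
  ultimately have "t * \<bar>h 0\<bar> \<le> t * (c + \<epsilon>)"
    using integral_le[OF t(1)] measure_Icc[of \<epsilon>] t(1) by (simp add: abs_mult algebra_simps)
  then show "\<bar>h 0\<bar> \<le> c + \<epsilon>"
    using t(1) by (simp add: mult_le_cancel_left_pos)
qed

lemma abs_integral_directional_derivative_le:
  fixes p :: "'a::euclidean_space \<Rightarrow> real" and p' :: "'a \<Rightarrow> 'a" and f :: "'a \<Rightarrow> real"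
  assumes p_deriv: "\<And>x. (p has_derivative (\<lambda>h. p' x \<bullet> h)) (at x)"
    and p'_cont: "continuous_on UNIV p'"
    and p'_int: "integrable lborel (\<lambda>x. norm (p' x))"
    and p_int: "integrable lborel p" and p_nonneg: "\<And>x. p x \<ge> 0"
    and f_cont: "continuous_on UNIV f" and f_bound: "\<And>x. \<bar>f x\<bar> \<le> F"
    and f_lip: "\<And>x t. \<bar>f (x + t *\<^sub>R e) - f x\<bar> \<le> L * \<bar>t\<bar>"
  shows "\<bar>\<integral>x. (p' x \<bullet> e) * f x \<partial>lborel\<bar> \<le> L * (\<integral>x. p x \<partial>lborel)"
proof -
  have [measurable]: "p \<in> borel_measurable borel" "p' \<in> borel_measurable borel"
    and f_meas [measurable]: "f \<in> borel_measurable borel"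
    using p_deriv p'_cont f_cont
    by (auto intro!: borel_measurable_continuous_onI continuous_at_imp_continuous_on
        dest: has_derivative_continuous)
  define h where "h s = (\<integral>y. (p' y \<bullet> e) * f (y - s *\<^sub>R e) \<partial>lborel)" for s
  have "\<bar>h 0\<bar> \<le> L * (\<integral>x. p x \<partial>lborel)"
  proof (rule abs_le_of_abs_integral_Icc_le)
    show "isCont h s" for s
      unfolding h_def[abs_def]
      by (rule isCont_integral_translated_pairing[OF _ p'_int f_cont f_bound]) measurable
    fix t :: real assume "t > 0"
    then show "\<bar>\<integral>s. indicator {0..t} s * h s \<partial>lborel\<bar> \<le> t * (L * (\<integral>x. p x \<partial>lborel))"
      using integral_Icc_translated_pairing[OF p_deriv p'_cont p'_int f_meas f_bound, of t e]
        abs_integral_translate_difference_le[OF _ _ p_int p_nonneg f_bound f_lip, of t]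
      by (simp add: h_def mult_ac)
  qed
  then show ?thesis by (simp add: h_def)
qed

lemma norm_diff_along_line_le:
  fixes \<Phi> :: "'a::real_normed_vector \<Rightarrow> 'h::real_normed_vector"
  assumes deriv: "\<And>y. ((\<lambda>t. \<Phi> (y + t *\<^sub>R i)) has_vector_derivative D y) (at 0)"
    and D_bound: "\<And>y. norm (D y) \<le> B"
  shows "norm (\<Phi> (x + t *\<^sub>R i) - \<Phi> x) \<le> B * \<bar>t\<bar>"
proof -
  define g where "g s = \<Phi> (x + s *\<^sub>R i)" for s
  have g_deriv: "(g has_vector_derivative D (x + s *\<^sub>R i)) (at s)" for s
  proof -
    have "((\<lambda>u. \<Phi> ((x + s *\<^sub>R i) + u *\<^sub>R i)) \<circ> (\<lambda>s'. s' - s)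
        has_vector_derivative 1 *\<^sub>R D (x + s *\<^sub>R i)) (at s)"
      by (rule vector_diff_chain_at) (auto intro!: derivative_eq_intros simp: deriv)
    moreover have "(\<lambda>u. \<Phi> ((x + s *\<^sub>R i) + u *\<^sub>R i)) \<circ> (\<lambda>s'. s' - s) = g"
      by (auto simp: g_def algebra_simps fun_eq_iff)
    ultimately show ?thesis by simp
  qed
  have "onorm (\<lambda>h. h *\<^sub>R D (x + s *\<^sub>R i)) \<le> B" for s
    using onorm_scaleR_left_lemma[OF bounded_linear_ident, of "D (x + s *\<^sub>R i)"]
      D_bound[of "x + s *\<^sub>R i"] by (simp add: onorm_id)
  then have "norm (g t - g 0) \<le> B * norm (t - 0)"
    using g_deriv
    by (intro differentiable_bound[where S=UNIV and f'="\<lambda>s h. h *\<^sub>R D (x + s *\<^sub>R i)"])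
      (auto simp: has_vector_derivative_def)
  then show ?thesis by (simp add: g_def)
qed

lemma norm_diff_along_Basis_le:
  fixes \<Phi> :: "'a::euclidean_space \<Rightarrow> 'h::real_normed_vector"
  assumes deriv: "\<forall>x. \<forall>i\<in>Basis. ((\<lambda>t. \<Phi> (x + t *\<^sub>R i)) has_vector_derivative D\<Phi> x i) (at 0)"
    and gradient_bound: "\<And>x. sqrt (\<Sum>i\<in>Basis. (norm (D\<Phi> x i))\<^sup>2) \<le> B"
    and i: "i \<in> Basis"
  shows "norm (\<Phi> (x + t *\<^sub>R i) - \<Phi> x) \<le> B * \<bar>t\<bar>"
proof (rule norm_diff_along_line_le)
  show "((\<lambda>t. \<Phi> (y + t *\<^sub>R i)) has_vector_derivative D\<Phi> y i) (at 0)" for y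
    using deriv i by blast
  show "norm (D\<Phi> y i) \<le> B" for y
  proof -
    have "(norm (D\<Phi> y i))\<^sup>2 \<le> (\<Sum>j\<in>Basis. (norm (D\<Phi> y j))\<^sup>2)"
      using i by (intro member_le_sum) auto
    from real_le_rsqrt[OF this] gradient_bound[of y] show ?thesis by linarith
  qed
qed

lemma norm_diff_add_sum_Basis_le:
  fixes \<Phi> :: "'a::euclidean_space \<Rightarrow> 'h::real_normed_vector"
  assumes along: "\<And>x t i. i \<in> Basis \<Longrightarrow> norm (\<Phi> (x + t *\<^sub>R i) - \<Phi> x) \<le> B * \<bar>t\<bar>"
    and "finite S" "S \<subseteq> Basis"
  shows "norm (\<Phi> (z + (\<Sum>i\<in>S. c i *\<^sub>R i)) - \<Phi> z) \<le> B * (\<Sum>i\<in>S. \<bar>c i\<bar>)"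
  using \<open>finite S\<close> \<open>S \<subseteq> Basis\<close>
proof (induction S arbitrary: z rule: finite_induct)
  case empty
  then show ?case by simp
next
  case (insert j S)
  let ?y = "z + (\<Sum>i\<in>S. c i *\<^sub>R i)"
  have sum_insert: "z + (\<Sum>i\<in>insert j S. c i *\<^sub>R i) = ?y + c j *\<^sub>R j"
    using insert by (simp add: algebra_simps)
  have "norm (\<Phi> (z + (\<Sum>i\<in>insert j S. c i *\<^sub>R i)) - \<Phi> z)
      \<le> norm (\<Phi> (?y + c j *\<^sub>R j) - \<Phi> ?y) + norm (\<Phi> ?y - \<Phi> z)"
    unfolding sum_insert by (rule norm_diff_triangle_le) (rule order_refl)+
  also have "\<dots> \<le> B * \<bar>c j\<bar> + B * (\<Sum>i\<in>S. \<bar>c i\<bar>)"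
    using insert along[of j] by (intro add_mono) auto
  finally show ?case
    using insert by (simp add: distrib_left)
qed

lemma lipschitz_on_of_lipschitz_along_Basis:
  fixes \<Phi> :: "'a::euclidean_space \<Rightarrow> 'h::real_normed_vector"
  assumes along: "\<And>x t i. i \<in> Basis \<Longrightarrow> norm (\<Phi> (x + t *\<^sub>R i) - \<Phi> x) \<le> B * \<bar>t\<bar>"
    and "B \<ge> 0"
  shows "(B * DIM('a))-lipschitz_on UNIV \<Phi>"
proof (rule lipschitz_onI)
  fix x y :: 'a
  have "dist (\<Phi> x) (\<Phi> y) = norm (\<Phi> (y + (\<Sum>i\<in>Basis. ((x - y) \<bullet> i) *\<^sub>R i)) - \<Phi> y)"
    by (simp add: dist_norm euclidean_representation)
  also have "\<dots> \<le> B * (\<Sum>i\<in>Basis. \<bar>(x - y) \<bullet> i\<bar>)"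
    by (rule norm_diff_add_sum_Basis_le[OF along]) auto
  also have "\<dots> \<le> B * (\<Sum>i\<in>(Basis::'a set). dist x y)"
    by (intro mult_left_mono sum_mono \<open>B \<ge> 0\<close>) (simp add: Basis_le_norm dist_norm)
  finally show "dist (\<Phi> x) (\<Phi> y) \<le> B * DIM('a) * dist x y"
    by simp
qed (simp add: \<open>B \<ge> 0\<close>)

lemma norm_integral_le_of_inner_le:
  fixes g :: "'b \<Rightarrow> 'h::{real_inner,banach,second_countable_topology}"
  assumes "integrable M g" and "C \<ge> 0"
    and inner_le: "\<And>v. \<bar>\<integral>x. g x \<bullet> v \<partial>M\<bar> \<le> C * norm v"
  shows "norm (integral\<^sup>L M g) \<le> C"
proof -
  let ?v = "integral\<^sup>L M g"
  have "norm ?v * norm ?v \<le> C * norm ?v"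
    using inner_le[of ?v] \<open>integrable M g\<close> by (simp add: dot_square_norm power2_eq_square)
  then show ?thesis
    using \<open>C \<ge> 0\<close> by (cases "norm ?v = 0") (simp_all add: mult_le_cancel_right_pos)
qed

lemma score_component_eq:
  assumes "P x > 0"
  shows "P x * (score P P' gV x \<bullet> i) = P' x \<bullet> i + P x * (gV x \<bullet> i)"
  using assms by (simp add: score_def inner_add_left field_simps)

lemma integrable_scaleR_bounded:
  fixes \<Phi> :: "'b \<Rightarrow> 'h::{banach,second_countable_topology}"
  assumes g_int: "integrable M g" and [measurable]: "\<Phi> \<in> borel_measurable M"
    and \<Phi>_bound: "\<And>x. norm (\<Phi> x) \<le> B"
  shows "integrable M (\<lambda>x. g x *\<^sub>R \<Phi> x)"
proof (rule Bochner_Integration.integrable_bound[of _ "\<lambda>x. B * g x"])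
  show "integrable M (\<lambda>x. B * g x)" using g_int by simp
  show "(\<lambda>x. g x *\<^sub>R \<Phi> x) \<in> borel_measurable M"
    using borel_measurable_integrable[OF g_int] by measurable
  have B: "B \<ge> 0" using norm_ge_zero \<Phi>_bound by (rule order_trans)
  have "norm (g x *\<^sub>R \<Phi> x) \<le> norm (B * g x)" for x
    using mult_left_mono[OF \<Phi>_bound[of x] abs_ge_zero[of "g x"]] B
    by (simp add: abs_mult mult.commute)
  then show "AE x in M. norm (g x *\<^sub>R \<Phi> x) \<le> norm (B * g x)" by simp
qed

lemma abs_drift_component_le:
  assumes "P x \<ge> 0" and "norm (gV x) \<le> G + M * norm x" and "norm i = 1"
  shows "\<bar>P x * (gV x \<bullet> i)\<bar> \<le> G * P x + M * (norm x * P x)"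
proof -
  have "\<bar>P x * (gV x \<bullet> i)\<bar> \<le> P x * (G + M * norm x)"
    using assms Cauchy_Schwarz_ineq2[of "gV x" i] by (auto simp: abs_mult intro!: mult_left_mono)
  then show ?thesis by (simp add: algebra_simps)
qed

lemma integrable_drift_component:
  fixes P :: "'a::euclidean_space \<Rightarrow> real" and gV :: "'a \<Rightarrow> 'a"
  assumes [measurable]: "P \<in> borel_measurable borel" "gV \<in> borel_measurable borel"
    and P_int: "integrable lborel P" and P_nonneg: "\<And>x. P x \<ge> 0"
    and moment_int: "integrable lborel (\<lambda>x. norm x * P x)"
    and gV_growth: "\<And>x. norm (gV x) \<le> G + M * norm x" and i: "norm i = 1"
  shows "integrable lborel (\<lambda>x. P x * (gV x \<bullet> i))"
proof (rule Bochner_Integration.integrable_bound[of _ "\<lambda>x. G * P x + M * (norm x * P x)"])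
  show "integrable lborel (\<lambda>x. G * P x + M * (norm x * P x))"
    using P_int moment_int by simp
  have "norm (P x * (gV x \<bullet> i)) \<le> norm (G * P x + M * (norm x * P x))" for x
    using abs_drift_component_le[where P=P and gV=gV and x=x, OF P_nonneg gV_growth i]
    by (metis abs_ge_self order_trans real_norm_def)
  then show "AE x in lborel. norm (P x * (gV x \<bullet> i)) \<le> norm (G * P x + M * (norm x * P x))"
    by simp
qed measurable

lemma integrable_score_component:
  fixes P :: "'a::euclidean_space \<Rightarrow> real" and P' gV :: "'a \<Rightarrow> 'a"
  assumes [measurable]: "P \<in> borel_measurable borel" "P' \<in> borel_measurable borel"
    "gV \<in> borel_measurable borel"
    and P'_int: "integrable lborel (\<lambda>x. norm (P' x))"
    and P_int: "integrable lborel P" and P_pos: "\<And>x. P x > 0"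
    and moment_int: "integrable lborel (\<lambda>x. norm x * P x)"
    and gV_growth: "\<And>x. norm (gV x) \<le> G + M * norm x" and i: "norm i = 1"
  shows "integrable lborel (\<lambda>x. P x * (score P P' gV x \<bullet> i))"
proof -
  have "integrable lborel (\<lambda>x. P' x \<bullet> i)"
    using P'_int by (simp add: integrable_norm_iff)
  moreover have "integrable lborel (\<lambda>x. P x * (gV x \<bullet> i))"
    using P_int P_pos moment_int gV_growth i
    by (intro integrable_drift_component) (auto simp: less_imp_le)
  ultimately show ?thesis
    by (simp add: score_component_eq[of P, OF P_pos])
qed

lemma abs_integral_drift_component_le:
  fixes P :: "'a::euclidean_space \<Rightarrow> real" and gV :: "'a \<Rightarrow> 'a" and f :: "'a \<Rightarrow> real"
  assumes [measurable]: "P \<in> borel_measurable borel" "gV \<in> borel_measurable borel"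
    "f \<in> borel_measurable borel"
    and P_int: "integrable lborel P" and P_nonneg: "\<And>x. P x \<ge> 0"
    and P_prob: "(\<integral>x. P x \<partial>lborel) = 1"
    and moment_int: "integrable lborel (\<lambda>x. norm x * P x)"
    and moment_le: "(\<integral>x. norm x * P x \<partial>lborel) \<le> R"
    and gV_growth: "\<And>x. norm (gV x) \<le> G + M * norm x" and "M \<ge> 0"
    and f_bound: "\<And>x. \<bar>f x\<bar> \<le> F" and i: "norm i = 1"
  shows "\<bar>\<integral>x. P x * (gV x \<bullet> i) * f x \<partial>lborel\<bar> \<le> F * (G + M * R)"
proof -
  have F: "F \<ge> 0" using f_bound[of 0] by linarith
  have "\<bar>P x * (gV x \<bullet> i) * f x\<bar> \<le> F * (G * P x + M * (norm x * P x))" for x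
  proof -
    have drift: "\<bar>P x * (gV x \<bullet> i)\<bar> \<le> G * P x + M * (norm x * P x)"
      by (rule abs_drift_component_le[OF P_nonneg gV_growth i])
    have "\<bar>P x * (gV x \<bullet> i) * f x\<bar> \<le> (G * P x + M * (norm x * P x)) * F"
      unfolding abs_mult[of _ "f x"] by (rule mult_mono[OF drift f_bound]) (use drift in auto)
    then show ?thesis by (simp add: mult.commute)
  qed
  moreover have "integrable lborel (\<lambda>x. P x * (gV x \<bullet> i) * f x)"
    using integrable_scaleR_bounded[OF integrable_drift_component[OF _ _ P_int P_nonneg moment_int
        gV_growth i] _ f_bound[unfolded real_norm_def[symmetric]]] by simp
  ultimately have "\<bar>\<integral>x. P x * (gV x \<bullet> i) * f x \<partial>lborel\<bar>
      \<le> (\<integral>x. F * (G * P x + M * (norm x * P x)) \<partial>lborel)"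
    using P_int moment_int by (intro integral_abs_bound_integral) auto
  also have "\<dots> = F * (G + M * (\<integral>x. norm x * P x \<partial>lborel))"
    using P_int moment_int P_prob by simp
  also have "\<dots> \<le> F * (G + M * R)"
    using F \<open>M \<ge> 0\<close> moment_le by (intro mult_left_mono add_left_mono) auto
  finally show ?thesis .
qed

lemma abs_integral_score_component_le:
  fixes P :: "'a::euclidean_space \<Rightarrow> real" and P' gV :: "'a \<Rightarrow> 'a" and f :: "'a \<Rightarrow> real"
  assumes P_deriv: "\<And>x. (P has_derivative (\<lambda>h. P' x \<bullet> h)) (at x)"
    and P'_cont: "continuous_on UNIV P'" and P'_int: "integrable lborel (\<lambda>x. norm (P' x))"
    and P_int: "integrable lborel P" and P_pos: "\<And>x. P x > 0" and P_prob: "(\<integral>x. P x \<partial>lborel) = 1"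
    and moment_int: "integrable lborel (\<lambda>x. norm x * P x)"
    and moment_le: "(\<integral>x. norm x * P x \<partial>lborel) \<le> R"
    and gV_cont: "continuous_on UNIV gV"
    and gV_growth: "\<And>x. norm (gV x) \<le> G + M * norm x" and "M \<ge> 0"
    and f_cont: "continuous_on UNIV f" and f_bound: "\<And>x. \<bar>f x\<bar> \<le> F"
    and f_lip: "\<And>x t. \<bar>f (x + t *\<^sub>R i) - f x\<bar> \<le> L * \<bar>t\<bar>"
    and i: "norm i = 1"
  shows "\<bar>\<integral>x. P x * (score P P' gV x \<bullet> i) * f x \<partial>lborel\<bar> \<le> L + F * (G + M * R)"
proof -
  have [measurable]: "P \<in> borel_measurable borel" "P' \<in> borel_measurable borel"
    "gV \<in> borel_measurable borel" "f \<in> borel_measurable borel"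
    using P_deriv P'_cont gV_cont f_cont
    by (auto intro!: borel_measurable_continuous_onI continuous_at_imp_continuous_on
        dest: has_derivative_continuous)
  have P_nonneg: "P x \<ge> 0" for x using P_pos[of x] by simp
  have "integrable lborel (\<lambda>x. (P' x \<bullet> i) * f x)"
    using P'_int integrable_scaleR_bounded[of lborel "\<lambda>x. P' x \<bullet> i" f F] f_bound
    by (simp add: integrable_norm_iff)
  moreover have "integrable lborel (\<lambda>x. P x * (gV x \<bullet> i) * f x)"
    using integrable_scaleR_bounded[OF integrable_drift_component[OF _ _ P_int P_nonneg moment_int
        gV_growth i] _ f_bound[unfolded real_norm_def[symmetric]]] by simp
  ultimately have "(\<integral>x. P x * (score P P' gV x \<bullet> i) * f x \<partial>lborel)
      = (\<integral>x. (P' x \<bullet> i) * f x \<partial>lborel) + (\<integral>x. P x * (gV x \<bullet> i) * f x \<partial>lborel)"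
    by (simp add: score_component_eq[of P, OF P_pos] distrib_right)
  moreover have "\<bar>\<integral>x. (P' x \<bullet> i) * f x \<partial>lborel\<bar> \<le> L"
    using abs_integral_directional_derivative_le[OF P_deriv P'_cont P'_int P_int P_nonneg
        f_cont f_bound f_lip] P_prob by simp
  moreover have "\<bar>\<integral>x. P x * (gV x \<bullet> i) * f x \<partial>lborel\<bar> \<le> F * (G + M * R)"
    by (rule abs_integral_drift_component_le[OF _ _ _ P_int P_nonneg P_prob moment_int moment_le
          gV_growth \<open>M \<ge> 0\<close> f_bound i]) measurable
  ultimately show ?thesis
    by linarith
qed

lemma norm_integral_score_component_le:
  fixes P :: "'a::euclidean_space \<Rightarrow> real" and P' gV :: "'a \<Rightarrow> 'a"
    and \<Phi> :: "'a \<Rightarrow> 'h::{real_inner,banach,second_countable_topology}"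
  assumes P_deriv: "\<And>x. (P has_derivative (\<lambda>h. P' x \<bullet> h)) (at x)"
    and P'_cont: "continuous_on UNIV P'" and P'_int: "integrable lborel (\<lambda>x. norm (P' x))"
    and P_int: "integrable lborel P" and P_pos: "\<And>x. P x > 0" and P_prob: "(\<integral>x. P x \<partial>lborel) = 1"
    and moment_int: "integrable lborel (\<lambda>x. norm x * P x)"
    and moment_le: "(\<integral>x. norm x * P x \<partial>lborel) \<le> R"
    and gV_cont: "continuous_on UNIV gV"
    and gV_growth: "\<And>x. norm (gV x) \<le> G + M * norm x" and "M \<ge> 0"
    and \<Phi>_cont: "continuous_on UNIV \<Phi>" and \<Phi>_bound: "\<And>x. norm (\<Phi> x) \<le> B"
    and \<Phi>_lip: "\<And>x t. norm (\<Phi> (x + t *\<^sub>R i) - \<Phi> x) \<le> B * \<bar>t\<bar>"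
    and i: "norm i = 1"
  shows "norm (\<integral>x. (P x * (score P P' gV x \<bullet> i)) *\<^sub>R \<Phi> x \<partial>lborel) \<le> B * (1 + G + M * R)"
proof (rule norm_integral_le_of_inner_le)
  have [measurable]: "P \<in> borel_measurable borel" "P' \<in> borel_measurable borel"
    "gV \<in> borel_measurable borel" "\<Phi> \<in> borel_measurable borel"
    using P_deriv P'_cont gV_cont \<Phi>_cont
    by (auto intro!: borel_measurable_continuous_onI continuous_at_imp_continuous_on
        dest: has_derivative_continuous)
  have B: "B \<ge> 0" using norm_ge_zero \<Phi>_bound by (rule order_trans)
  have G: "G \<ge> 0"
    using gV_growth[of 0] by (simp add: order_trans[OF norm_ge_zero])
  have "(\<integral>x. norm x * P x \<partial>lborel) \<ge> 0"
    using P_pos by (simp add: less_imp_le)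
  with moment_le have R: "R \<ge> 0" by linarith
  show "B * (1 + G + M * R) \<ge> 0"
    using B G R \<open>M \<ge> 0\<close> by simp
  show "integrable lborel (\<lambda>x. (P x * (score P P' gV x \<bullet> i)) *\<^sub>R \<Phi> x)"
    by (rule integrable_scaleR_bounded[OF integrable_score_component[OF _ _ _ P'_int P_int P_pos
          moment_int gV_growth i] _ \<Phi>_bound]) measurable
  fix v
  have "\<bar>\<integral>x. ((P x * (score P P' gV x \<bullet> i)) *\<^sub>R \<Phi> x) \<bullet> v \<partial>lborel\<bar>
      = \<bar>\<integral>x. P x * (score P P' gV x \<bullet> i) * (\<Phi> x \<bullet> v) \<partial>lborel\<bar>"
    by simp
  also have "\<dots> \<le> B * norm v + B * norm v * (G + M * R)"
  proof (rule abs_integral_score_component_le[OF P_deriv P'_cont P'_int P_int P_pos P_prob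
        moment_int moment_le gV_cont gV_growth \<open>M \<ge> 0\<close> _ _ _ i])
    show "continuous_on UNIV (\<lambda>x. \<Phi> x \<bullet> v)"
      by (intro continuous_intros \<Phi>_cont)
    show "\<bar>\<Phi> x \<bullet> v\<bar> \<le> B * norm v" for x
      using Cauchy_Schwarz_ineq2[of "\<Phi> x" v] mult_right_mono[OF \<Phi>_bound[of x] norm_ge_zero[of v]]
      by linarith
    show "\<bar>\<Phi> (x + t *\<^sub>R i) \<bullet> v - \<Phi> x \<bullet> v\<bar> \<le> B * norm v * \<bar>t\<bar>" for x t
    proof -
      have "\<bar>\<Phi> (x + t *\<^sub>R i) \<bullet> v - \<Phi> x \<bullet> v\<bar> \<le> norm (\<Phi> (x + t *\<^sub>R i) - \<Phi> x) * norm v"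
        using Cauchy_Schwarz_ineq2[of "\<Phi> (x + t *\<^sub>R i) - \<Phi> x" v] by (simp add: inner_diff_left)
      also have "\<dots> \<le> B * \<bar>t\<bar> * norm v"
        by (intro mult_right_mono \<Phi>_lip) simp
      finally show ?thesis by (simp add: ac_simps)
    qed
  qed
  finally show "\<bar>\<integral>x. ((P x * (score P P' gV x \<bullet> i)) *\<^sub>R \<Phi> x) \<bullet> v \<partial>lborel\<bar>
      \<le> B * (1 + G + M * R) * norm v"
    by (simp add: algebra_simps)
qed

lemma integral_le_of_nn_integral_le:
  fixes f :: "'b \<Rightarrow> real"
  assumes [measurable]: "f \<in> borel_measurable M" and f_nonneg: "\<And>x. f x \<ge> 0"
    and nn_le: "(\<integral>\<^sup>+x. ennreal (f x) \<partial>M) \<le> ennreal R"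
  shows "integrable M f" and "(\<integral>x. f x \<partial>M) \<le> max R 0"
proof -
  have nn_le': "(\<integral>\<^sup>+x. ennreal (f x) \<partial>M) \<le> ennreal (max R 0)"
    using nn_le by (rule order_trans) (simp add: ennreal_leI)
  then show "integrable M f"
    using f_nonneg by (intro integrableI_bounded) (auto simp: top.not_eq_extremum le_less_trans)
  have "(\<integral>x. f x \<partial>M) = enn2real (\<integral>\<^sup>+x. ennreal (f x) \<partial>M)"
    by (rule integral_eq_nn_integral) (auto simp: f_nonneg)
  also have "\<dots> \<le> max R 0"
    using enn2real_mono[OF nn_le'] by simp
  finally show "(\<integral>x. f x \<partial>M) \<le> max R 0" .
qed

lemma lipschitz_on_UNIV_norm_le:
  assumes "M-lipschitz_on UNIV f"
  shows "norm (f x) \<le> norm (f 0) + M * norm x"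
proof -
  have "norm (f x - f 0) \<le> M * norm x"
    using lipschitz_on_normD[OF assms, of x 0] by simp
  then show ?thesis
    using norm_triangle_ineq2[of "f x" "f 0"] by linarith
qed

lemma I_Stein_le:
  fixes \<Phi> :: "'a::euclidean_space \<Rightarrow> 'h::{real_inner,banach,second_countable_topology}"
    and K :: real
  assumes "\<And>i. i \<in> Basis \<Longrightarrow> norm (\<integral>x. (p x * (g x \<bullet> i)) *\<^sub>R \<Phi> x \<partial>lborel) \<le> K"
  shows "I_Stein \<Phi> p g \<le> DIM('a) * K\<^sup>2"
proof -
  have "I_Stein \<Phi> p g \<le> (\<Sum>i\<in>(Basis::'a set). K\<^sup>2)"
    unfolding I_Stein_def using assms by (intro sum_mono power_mono) auto
  then show ?thesis by simp
qed

theorem lemma7: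
  fixes V :: "'a::euclidean_space \<Rightarrow> real"
    and gV :: "'a \<Rightarrow> 'a"
    and HV :: "'a \<Rightarrow> 'a \<Rightarrow>\<^sub>L 'a"
    and k :: "'a \<Rightarrow> 'a \<Rightarrow> real"
    and \<Phi> :: "'a \<Rightarrow> 'h::{real_inner,banach,second_countable_topology}"
    and D\<Phi> :: "'a \<Rightarrow> 'a \<Rightarrow> 'h"
    and p :: "nat \<Rightarrow> 'a \<Rightarrow> real"
    and p' :: "nat \<Rightarrow> 'a \<Rightarrow> 'a"
    and \<gamma> M :: real
  assumes V_grad: "\<forall>x. (V has_derivative (\<lambda>h. gV x \<bullet> h)) (at x)"
    and V_C2: "\<forall>x. (gV has_derivative blinfun_apply (HV x)) (at x)" "continuous_on UNIV HV"
    and pi_normalizable: "integrable lborel (\<lambda>x. exp (- V x))"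
    and kernel: "\<forall>x y. k x y = \<Phi> x \<bullet> \<Phi> y"
    and D\<Phi>: "\<forall>x. \<forall>i\<in>Basis. ((\<lambda>t. \<Phi> (x + t *\<^sub>R i)) has_vector_derivative D\<Phi> x i) (at 0)"
    and A1: "\<exists>B>0. \<forall>x. norm (\<Phi> x) \<le> B \<and> sqrt (\<Sum>i\<in>Basis. (norm (D\<Phi> x i))\<^sup>2) \<le> B"
    and lip: "M-lipschitz_on UNIV (\<lambda>x. - gV x)"
    and gamma_pos: "\<gamma> > 0"
    and dens_meas: "\<forall>n. p n \<in> borel_measurable lborel"
    and dens_pos: "\<forall>n x. p n x > 0"
    and dens_prob: "\<forall>n. integrable lborel (p n) \<and> (\<integral>x. p n x \<partial>lborel) = 1"
    and dens_grad: "\<forall>n x. (p n has_derivative (\<lambda>h. p' n x \<bullet> h)) (at x)"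
    and dens_grad_cont: "\<forall>n. continuous_on UNIV (p' n)"
    and dens_grad_int: "\<forall>n. integrable lborel (\<lambda>x. norm (p' n x))"
    and P2: "integrable lborel (\<lambda>x. (norm x)\<^sup>2 * p 0 x)"
    and svgd: "\<forall>n. distr (density lborel (p n)) lborel
                   (svgd_map \<gamma> k (p n) (score (p n) (p' n) gV))
                 = density lborel (p (Suc n))"
    and moment: "\<exists>R. \<forall>n. (\<integral>\<^sup>+x. ennreal (norm x * p n x) \<partial>lborel) \<le> ennreal R"
  shows "\<exists>C>0. \<forall>n. I_Stein \<Phi> (p n) (score (p n) (p' n) gV) \<le> C"
proof -
  obtain B where "B > 0" and \<Phi>_bound: "\<And>x. norm (\<Phi> x) \<le> B"
    and D\<Phi>_bound: "\<And>x. sqrt (\<Sum>i\<in>Basis. (norm (D\<Phi> x i))\<^sup>2) \<le> B"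
    using A1 by blast
  note \<Phi>_along = norm_diff_along_Basis_le[OF D\<Phi> D\<Phi>_bound]
  have \<Phi>_cont: "continuous_on UNIV \<Phi>"
    using lipschitz_on_of_lipschitz_along_Basis[OF \<Phi>_along] \<open>B > 0\<close>
    by (intro lipschitz_on_continuous_on) simp
  have "M-lipschitz_on UNIV gV" using lip by simp
  then have gV_cont: "continuous_on UNIV gV" and "M \<ge> 0"
    and gV_growth: "\<And>x. norm (gV x) \<le> norm (gV 0) + M * norm x"
    by (auto intro: lipschitz_on_continuous_on lipschitz_on_nonneg lipschitz_on_UNIV_norm_le)
  obtain R where R: "\<And>n. (\<integral>\<^sup>+x. ennreal (norm x * p n x) \<partial>lborel) \<le> ennreal R"
    using moment by blast
  have moment_bound:
    "integrable lborel (\<lambda>x. norm x * p n x) \<and> (\<integral>x. norm x * p n x \<partial>lborel) \<le> max R 0" for n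
  proof -
    have [measurable]: "p n \<in> borel_measurable lborel" using dens_meas by blast
    have "0 \<le> norm x * p n x" for x using dens_pos by (simp add: less_imp_le)
    with R[of n] show ?thesis by (intro conjI integral_le_of_nn_integral_le) measurable
  qed
  define K where "K = B * (1 + norm (gV 0) + M * max R 0)"
  have "norm (\<integral>x. (p n x * (score (p n) (p' n) gV x \<bullet> i)) *\<^sub>R \<Phi> x \<partial>lborel) \<le> K"
    if "i \<in> Basis" for n i
    unfolding K_def
    using dens_prob norm_integral_score_component_le[OF dens_grad[rule_format]
        dens_grad_cont[rule_format] dens_grad_int[rule_format] _ dens_pos[rule_format] _
        moment_bound[THEN conjunct1] moment_bound[THEN conjunct2] gV_cont gV_growth \<open>M \<ge> 0\<close>
        \<Phi>_cont \<Phi>_bound \<Phi>_along[OF that] norm_Basis[OF that]]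
    by blast
  then have "I_Stein \<Phi> (p n) (score (p n) (p' n) gV) \<le> DIM('a) * K\<^sup>2" for n
    by (rule I_Stein_le)
  then show ?thesis
    by (intro exI[of _ "DIM('a) * K\<^sup>2 + 1"] conjI allI
        order_trans[OF _ less_imp_le[OF less_add_one]]) (simp_all add: add_nonneg_pos)
qed

end
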